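(* A semigroup $\langle A;\cdot\rangle$ is an Abelian algebra if and only if $\langle A;\cdot\rangle$ is stationary and for all $a,b,c,d,u,v\in A$ the equality $aub=cud$ implies $avb=cvd$.
   Context: A semigroup $\langle A;\cdot\rangle$ is called stationary if for all $u,v,b,c\in A$, $ub=uc$ implies $vb=vc$, and $bu=cu$ implies $bv=cv$. A polynomial operation of an algebra is an operation obtained from a term by substituting elements of the algebra for some of its variables. An algebra is called Abelian if for every polynomial operation $t(x,y_1,\ldots,y_n)$ and all elements $u,v,c_1,\ldots,c_n,d_1,\ldots,d_n$ of the algebra, $t(u,c_1,\ldots,c_n)=t(u,d_1,\ldots,d_n)$ implies $t(v,c_1,\ldots,c_n)=t(v,d_1,\ldots,d_n)$. (An "Abelian semigroup" means a semigroup that is an Abelian algebra in this sense.) *)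

theory Defs
  imports Main
begin

text \<open>Terms of the semigroup signature with variables (indexed by nat) and
  constants from the algebra; evaluating such a term gives exactly the
  polynomial operations of the semigroup.\<close>
datatype 'a sg_term = Var nat | Const 'a | Mul "'a sg_term" "'a sg_term"

primrec sg_eval :: "'a::semigroup_mult sg_term \<Rightarrow> (nat \<Rightarrow> 'a) \<Rightarrow> 'a" where
  "sg_eval (Var i) e = e i"
| "sg_eval (Const a) e = a"
| "sg_eval (Mul s t) e = sg_eval s e * sg_eval t e"

text \<open>Abelian algebra (term condition for polynomials): variable 0 plays the
  role of x, all other variables the roles of y_1, ..., y_n.\<close>
definition abelian_semigroup :: "'a::semigroup_mult itself \<Rightarrow> bool" where
  "abelian_semigroup _ \<longleftrightarrow>
     (\<forall>(t :: 'a sg_term) (u :: 'a) v (c :: nat \<Rightarrow> 'a) d.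
        sg_eval t (c(0 := u)) = sg_eval t (d(0 := u)) \<longrightarrow>
        sg_eval t (c(0 := v)) = sg_eval t (d(0 := v)))"

definition stationary :: "'a::semigroup_mult itself \<Rightarrow> bool" where
  "stationary _ \<longleftrightarrow>
     (\<forall>(u :: 'a) v b c. (u * b = u * c \<longrightarrow> v * b = v * c) \<and>
                       (b * u = c * u \<longrightarrow> b * v = c * v))"

end

theory Submission
  imports Defs
begin

text \<open>If \<open>t(u, c\<^sub>1, \<dots>, c\<^sub>n) = t(u, d\<^sub>1, \<dots>, d\<^sub>n)\<close>, change the
  occurrences of \<open>x\<close> from \<open>u\<close> to \<open>v\<close> one at a time, on both sides simultaneously.
  Each single change is an equation \<open>L u R = L' u R'\<close> in which \<open>L, L'\<close> (resp. \<open>R, R'\<close>)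
  are elements of the semigroup with an identity adjoined, both proper or both the
  identity since both sides come from the same term. Stationarity handles the cases
  where only one side carries a proper context, the middle condition
  \<open>aub = cud \<Longrightarrow> avb = cvd\<close> the case where both do. Conversely, stationarity and the
  middle condition are the term condition for the polynomials \<open>xy\<close>, \<open>yx\<close> and \<open>y\<^sub>1 x y\<^sub>2\<close>.\<close>

definition middle_stationary :: "'a::semigroup_mult itself \<Rightarrow> bool" where
  "middle_stationary _ \<longleftrightarrow>
     (\<forall>a b c d u v :: 'a. a * u * b = c * u * d \<longrightarrow> a * v * b = c * v * d)"

text \<open>\<open>None\<close> stands for the adjoined identity.\<close>

definition sandwich :: "'a::semigroup_mult option \<Rightarrow> 'a \<Rightarrow> 'a option \<Rightarrow> 'a" where
  "sandwich L x R =
     (let y = (case L of None \<Rightarrow> x | Some l \<Rightarrow> l * x) in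
      case R of None \<Rightarrow> y | Some r \<Rightarrow> y * r)"

lemma sandwich_simps [simp]:
  "sandwich None x None = x"
  "sandwich (Some l) x None = l * x"
  "sandwich None x (Some r) = x * r"
  "sandwich (Some l) x (Some r) = l * x * r"
  by (simp_all add: sandwich_def)

lemma sandwich_mult_right:
  "sandwich L (x * y) R = sandwich L x (Some (sandwich None y R))"
  by (cases L; cases R) (simp_all add: mult.assoc)

lemma sandwich_mult_left:
  "sandwich L (x * y) R = sandwich (Some (sandwich L x None)) y R"
  by (cases L; cases R) (simp_all add: mult.assoc)

lemma sandwich_transfer:
  fixes u v :: "'a::semigroup_mult"
  assumes "stationary TYPE('a)" and "middle_stationary TYPE('a)"
    and "(L = None) = (L' = None)" and "(R = None) = (R' = None)"
    and "sandwich L u R = sandwich L' u R'"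
  shows "sandwich L v R = sandwich L' v R'"
proof -
  have left: "l * u = l' * u \<Longrightarrow> l * v = l' * v" for l l'
    using assms(1) unfolding stationary_def by blast
  have right: "u * r = u * r' \<Longrightarrow> v * r = v * r'" for r r'
    using assms(1) unfolding stationary_def by blast
  have middle: "l * u * r = l' * u * r' \<Longrightarrow> l * v * r = l' * v * r'" for l l' r r'
    using assms(2) unfolding middle_stationary_def by blast
  show ?thesis
    using assms(3-5) by (cases L; cases L'; cases R; cases R') (auto intro: left right middle)
qed

lemma sg_eval_sandwich_transfer:
  fixes t :: "'a::semigroup_mult sg_term"
  assumes st: "stationary TYPE('a)" and mst: "middle_stationary TYPE('a)"
  shows "(L = None) = (L' = None) \<Longrightarrow> (R = None) = (R' = None) \<Longrightarrow>
    sandwich L (sg_eval t (c(0 := u))) R = sandwich L' (sg_eval t (d(0 := u))) R' \<Longrightarrow>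
    sandwich L (sg_eval t (c(0 := v))) R = sandwich L' (sg_eval t (d(0 := v))) R'"
proof (induction t arbitrary: L L' R R')
  case (Var n)
  show ?case
  proof (cases "n = 0")
    case True
    then show ?thesis
      using Var.prems(3) sandwich_transfer[OF st mst Var.prems(1,2), of u v] by simp
  next
    case False
    then show ?thesis using Var.prems(3) by simp
  qed
next
  case (Const a)
  then show ?case by simp
next
  case (Mul s t)
  let ?s = "sg_eval s" and ?t = "sg_eval t"
  let ?cu = "c(0 := u)" and ?du = "d(0 := u)" and ?cv = "c(0 := v)" and ?dv = "d(0 := v)"
  have "sandwich L (?s ?cu) (Some (sandwich None (?t ?cu) R))
      = sandwich L' (?s ?du) (Some (sandwich None (?t ?du) R'))"
    using Mul.prems(3) by (simp only: sg_eval.simps sandwich_mult_right)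
  then have "sandwich L (?s ?cv) (Some (sandwich None (?t ?cu) R))
      = sandwich L' (?s ?dv) (Some (sandwich None (?t ?du) R'))"
    using Mul.IH(1) Mul.prems(1) by blast
  then have "sandwich (Some (sandwich L (?s ?cv) None)) (?t ?cu) R
      = sandwich (Some (sandwich L' (?s ?dv) None)) (?t ?du) R'"
    by (simp only: sandwich_mult_left [symmetric] sandwich_mult_right [symmetric])
  then have "sandwich (Some (sandwich L (?s ?cv) None)) (?t ?cv) R
      = sandwich (Some (sandwich L' (?s ?dv) None)) (?t ?dv) R'"
    using Mul.IH(2) Mul.prems(2) by blast
  then show ?case by (simp only: sg_eval.simps sandwich_mult_left)
qed

lemma abelian_if_stationary_middle_stationary:
  assumes "stationary TYPE('a::semigroup_mult)" and "middle_stationary TYPE('a)"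
  shows "abelian_semigroup TYPE('a)"
  unfolding abelian_semigroup_def
proof (intro allI impI)
  fix t :: "'a sg_term" and u v :: 'a and c d :: "nat \<Rightarrow> 'a"
  assume "sg_eval t (c(0 := u)) = sg_eval t (d(0 := u))"
  then show "sg_eval t (c(0 := v)) = sg_eval t (d(0 := v))"
    using sg_eval_sandwich_transfer[OF assms, of None None None None t c u d v] by simp
qed

lemma stationary_if_abelian:
  assumes "abelian_semigroup TYPE('a::semigroup_mult)"
  shows "stationary TYPE('a)"
  unfolding stationary_def
proof (intro allI conjI impI)
  fix u v b c :: 'a
  show "u * b = u * c \<Longrightarrow> v * b = v * c"
    using assms[unfolded abelian_semigroup_def, rule_format,
        of "Mul (Var 0) (Var 1)" "\<lambda>_. b" u "\<lambda>_. c" v] by simp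
  show "b * u = c * u \<Longrightarrow> b * v = c * v"
    using assms[unfolded abelian_semigroup_def, rule_format,
        of "Mul (Var 1) (Var 0)" "\<lambda>_. b" u "\<lambda>_. c" v] by simp
qed

lemma middle_stationary_if_abelian:
  assumes "abelian_semigroup TYPE('a::semigroup_mult)"
  shows "middle_stationary TYPE('a)"
  unfolding middle_stationary_def
proof (intro allI impI)
  fix a b c d u v :: 'a
  assume "a * u * b = c * u * d"
  then show "a * v * b = c * v * d"
    using assms[unfolded abelian_semigroup_def, rule_format,
        of "Mul (Mul (Var 1) (Var 0)) (Var 2)" "\<lambda>i. if i = 1 then a else b" u
          "\<lambda>i. if i = 1 then c else d" v] by simp
qed

theorem mainTheorem10:
  shows "abelian_semigroup TYPE('a::semigroup_mult) \<longleftrightarrow>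
    (stationary TYPE('a) \<and>
     (\<forall>a b c d u v :: 'a. a * u * b = c * u * d \<longrightarrow> a * v * b = c * v * d))"
  using abelian_if_stationary_middle_stationary stationary_if_abelian middle_stationary_if_abelian
    middle_stationary_def by blast

end
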